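(* In the discrete torus model with frame group $\mathbb{Z}_4$ and its universal calculus (context), the torsion-free and cotorsion-free spin connections are exactly \[A_{\bar1}=\alpha e_1+\beta e_2,\quad A_{\bar2}=\tfrac12(-\alpha+\beta-\gamma-\delta-s_1)e_1+\tfrac12(-\alpha-\beta+\gamma-\delta-s_2)e_2,\quad A_{\bar3}=\gamma e_1+\delta e_2,\] for functions $\alpha,\beta,\gamma,\delta$ such that $a=\gamma-\alpha$ and $b=\beta-\delta$ satisfy $(R_1+R_2)a=0$ and $(R_1+R_2)b=0$, where $s_1=\bar\partial^2\Theta_1$, $s_2=\bar\partial^1\Theta_2$. The covariant derivative is \[\nabla e_1=(b-s_1)e_1\otimes e_1+a\,e_1\otimes e_2+(a-s_2)e_2\otimes e_1-b\,e_2\otimes e_2,\] \[\nabla e_2=-a\,e_1\otimes e_1+(b-s_1)e_1\otimes e_2+b\,e_2\otimes e_1+(a-s_2)e_2\otimes e_2.\]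
   Context: Discrete torus model: $\Sigma=\mathbb{Z}_2\times\mathbb{Z}_2$, $x\to y$ iff $y-x\in\{(1,0),(0,1)\}$; diagonal zweibein $e_{1,x,x+(1,0)}=\Theta_1(x)^{-1}$, $e_{2,x,x+(0,1)}=\Theta_2(x)^{-1}$, $\Theta_a$ nowhere-vanishing with $\Theta_1R_1\Theta_2=\Theta_2R_2\Theta_1$; $R_1f(x)=f(x+(1,0))$, $R_2f(x)=f(x+(0,1))$, $\bar\partial^a=R_a-\mathrm{id}$; $e_af=R_a(f)e_a$, $\mathrm{d}f=\sum_a(\bar\partial^af)\Theta_ae_a$. Two-forms: $e_1\wedge e_2=-e_2\wedge e_1$, $e_a\wedge e_a=0$; $\mathrm{d}e_1=(\bar\partial^1\Theta_2)e_1\wedge e_2$, $\mathrm{d}e_2=-(\bar\partial^2\Theta_1)e_1\wedge e_2$. Frame group $\mathbb{Z}_4=\{\bar0,\bar1,\bar2,\bar3\}$ acting on $V=\mathrm{span}\{e_1,e_2\}$ by quarter rotations ($\bar1$: $e_1\mapsto e_2$, $e_2\mapsto-e_1$), with universal calculus $\mathcal C=\{\bar1,\bar2,\bar3\}$; $f^i=i-\bar0$, so $f^{\bar1}\triangleright e_1=e_2-e_1$, $f^{\bar1}\triangleright e_2=-e_1-e_2$, $f^{\bar2}\triangleright e_a=-2e_a$, $f^{\bar3}\triangleright e_1=-e_1-e_2$, $f^{\bar3}\triangleright e_2=e_1-e_2$. A spin connection is a triple of 1-forms $A_{\bar1},A_{\bar2},A_{\bar3}$. Torsion-free: $\mathrm{d}e_a+\sum_iA_i\wedge(f^i\triangleright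 e_a)=0$; cotorsion-free: $\mathrm{d}e_a+\sum_i(f^{-i}\triangleright e_a)\wedge A_i=0$ (inverse $-i$ in $\mathbb{Z}_4$). Covariant derivative $\nabla(\sum\alpha^ae_a)=\sum\mathrm{d}\alpha^a\otimes e_a-\sum_{i,a}\alpha^aA_i\otimes f^i\triangleright e_a$. *)

theory Defs
  imports Complex_Main
begin

text \<open>Discrete torus: points of Z2 x Z2 encoded as bool x bool (addition = xor).\<close>
type_synonym pt = "bool \<times> bool"
type_synonym fn = "pt \<Rightarrow> complex"

definition R1 :: "fn \<Rightarrow> fn" where "R1 f = (\<lambda>(x, y). f (\<not> x, y))"
definition R2 :: "fn \<Rightarrow> fn" where "R2 f = (\<lambda>(x, y). f (x, \<not> y))"
definition dbar1 :: "fn \<Rightarrow> fn" where "dbar1 f = (\<lambda>p. R1 f p - f p)"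
definition dbar2 :: "fn \<Rightarrow> fn" where "dbar2 f = (\<lambda>p. R2 f p - f p)"

datatype idx = E1 | E2

text \<open>One-forms f1 e1 + f2 e2 (left coefficients), two-forms f e1/\e2 (left coefficient),
  elements of Omega1 (x) Omega1 as left coefficients of e_a (x) e_b.\<close>
type_synonym oneform = "idx \<Rightarrow> fn"
type_synonym twoform = fn
type_synonym tensor = "idx \<Rightarrow> idx \<Rightarrow> fn"

definition Rdir :: "idx \<Rightarrow> fn \<Rightarrow> fn" where
  "Rdir a = (case a of E1 \<Rightarrow> R1 | E2 \<Rightarrow> R2)"
definition dbar :: "idx \<Rightarrow> fn \<Rightarrow> fn" where
  "dbar a = (case a of E1 \<Rightarrow> dbar1 | E2 \<Rightarrow> dbar2)"

definition mkform :: "fn \<Rightarrow> fn \<Rightarrow> oneform" where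
  "mkform f g = (\<lambda>a. case a of E1 \<Rightarrow> f | E2 \<Rightarrow> g)"

definition mkten :: "fn \<Rightarrow> fn \<Rightarrow> fn \<Rightarrow> fn \<Rightarrow> tensor" where
  "mkten c11 c12 c21 c22 = (\<lambda>a b. case (a, b) of
      (E1, E1) \<Rightarrow> c11 | (E1, E2) \<Rightarrow> c12 | (E2, E1) \<Rightarrow> c21 | (E2, E2) \<Rightarrow> c22)"

definition basis :: "idx \<Rightarrow> oneform" where
  "basis a = (\<lambda>b p. if b = a then 1 else 0)"

text \<open>Wedge product using e_a f = R_a(f) e_a, e1/\e2 = - e2/\e1, e_a/\e_a = 0:
  (f1 e1 + f2 e2)/\(g1 e1 + g2 e2) = (f1 R1(g2) - f2 R2(g1)) e1/\e2.\<close>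
definition wedge :: "oneform \<Rightarrow> oneform \<Rightarrow> twoform" where
  "wedge w v = (\<lambda>p. w E1 p * R1 (v E2) p - w E2 p * R2 (v E1) p)"

definition dfun :: "fn \<Rightarrow> fn \<Rightarrow> fn \<Rightarrow> oneform" where
  "dfun Th1 Th2 f = mkform (\<lambda>p. dbar1 f p * Th1 p) (\<lambda>p. dbar2 f p * Th2 p)"

definition de :: "fn \<Rightarrow> fn \<Rightarrow> idx \<Rightarrow> twoform" where
  "de Th1 Th2 a = (case a of E1 \<Rightarrow> dbar1 Th2 | E2 \<Rightarrow> (\<lambda>p. - dbar2 Th1 p))"

datatype z4 = Z0 | Z1 | Z2 | Z3

definition z4neg :: "z4 \<Rightarrow> z4" where
  "z4neg i = (case i of Z0 \<Rightarrow> Z0 | Z1 \<Rightarrow> Z3 | Z2 \<Rightarrow> Z2 | Z3 \<Rightarrow> Z1)"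

text \<open>Universal calculus C = Z4 minus identity.\<close>
definition calcC :: "z4 set" where "calcC = {Z1, Z2, Z3}"

text \<open>Quarter-rotation action on V = span{e1,e2}: rot i a b = coefficient of e_b in i |> e_a.\<close>
definition rot :: "z4 \<Rightarrow> idx \<Rightarrow> idx \<Rightarrow> complex" where
  "rot i a b = (case (i, a, b) of
      (Z0, _, _) \<Rightarrow> (if a = b then 1 else 0)
    | (Z1, E1, E2) \<Rightarrow> 1 | (Z1, E2, E1) \<Rightarrow> -1 | (Z1, _, _) \<Rightarrow> 0
    | (Z2, _, _) \<Rightarrow> (if a = b then -1 else 0)
    | (Z3, E1, E2) \<Rightarrow> -1 | (Z3, E2, E1) \<Rightarrow> 1 | (Z3, _, _) \<Rightarrow> 0)"

definition fact :: "z4 \<Rightarrow> idx \<Rightarrow> idx \<Rightarrow> complex" where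
  "fact i a b = rot i a b - rot Z0 a b"

definition constform :: "(idx \<Rightarrow> complex) \<Rightarrow> oneform" where
  "constform v = (\<lambda>b p. v b)"

text \<open>Spin connection: A i for i in C (values at Z0 are irrelevant).\<close>
definition torsion_free :: "fn \<Rightarrow> fn \<Rightarrow> (z4 \<Rightarrow> oneform) \<Rightarrow> bool" where
  "torsion_free Th1 Th2 A \<longleftrightarrow> (\<forall>a p.
     de Th1 Th2 a p + (\<Sum>i\<in>calcC. wedge (A i) (constform (fact i a)) p) = 0)"

definition cotorsion_free :: "fn \<Rightarrow> fn \<Rightarrow> (z4 \<Rightarrow> oneform) \<Rightarrow> bool" where
  "cotorsion_free Th1 Th2 A \<longleftrightarrow> (\<forall>a p.
     de Th1 Th2 a p + (\<Sum>i\<in>calcC. wedge (constform (fact (z4neg i) a)) (A i) p) = 0)"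

text \<open>Covariant derivative nabla(sum_a alpha^a e_a) =
  sum_a d alpha^a (x) e_a - sum_{i,a} alpha^a A_i (x) (f^i |> e_a),
  as left coefficients of e_c (x) e_b.\<close>
definition nabla :: "fn \<Rightarrow> fn \<Rightarrow> (z4 \<Rightarrow> oneform) \<Rightarrow> oneform \<Rightarrow> tensor" where
  "nabla Th1 Th2 A w = (\<lambda>c b p.
     dfun Th1 Th2 (w b) c p
     - (\<Sum>i\<in>calcC. \<Sum>a\<in>{E1, E2}. w a p * A i c p * fact i a b))"

end

theory Submission
  imports Defs
begin

text \<open>Torsion-freeness is a pointwise linear system in the six coefficient functions of
  A_1, A_2, A_3 which can always be solved for A_2: this yields the parametrisation by
  \<alpha>, \<beta>, \<gamma>, \<delta>. Substituting it into cotorsion-freeness, all terms cancel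
  (the \<Theta>-terms because R_a is an involution, so R_a (dbar^a \<Theta>) = - dbar^a \<Theta>) except
  (R_1 + R_2)(\<gamma> - \<alpha>) and (R_1 + R_2)(\<beta> - \<delta>). The covariant derivative of the constant
  frame e_a only involves the connection terms, which are read off from the same
  parametrisation.\<close>

definition torsion_free_params ::
    "fn \<Rightarrow> fn \<Rightarrow> (z4 \<Rightarrow> oneform) \<Rightarrow> fn \<Rightarrow> fn \<Rightarrow> fn \<Rightarrow> fn \<Rightarrow> bool" where
  "torsion_free_params Th1 Th2 A \<alpha> \<beta> \<gamma> \<delta> \<longleftrightarrow>
     A Z1 = mkform \<alpha> \<beta>
   \<and> A Z2 = mkform
       (\<lambda>p. (- \<alpha> p + \<beta> p - \<gamma> p - \<delta> p - dbar2 Th1 p) / 2)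
       (\<lambda>p. (- \<alpha> p - \<beta> p + \<gamma> p - \<delta> p - dbar1 Th2 p) / 2)
   \<and> A Z3 = mkform \<gamma> \<delta>"

lemma all_idx: "(\<forall>a. P a) \<longleftrightarrow> P E1 \<and> P E2"
  by (metis (full_types) idx.exhaust)

lemma R_const [simp]: "R1 (\<lambda>_. c) = (\<lambda>_. c)" "R2 (\<lambda>_. c) = (\<lambda>_. c)"
  by (auto simp: R1_def R2_def)

lemma eq_mkform_iff: "w = mkform f g \<longleftrightarrow> w E1 = f \<and> w E2 = g"
  unfolding mkform_def by (auto split: idx.split)

lemma torsion_free_iff:
  "torsion_free Th1 Th2 A \<longleftrightarrow> (\<forall>p.
     A Z2 E1 p = (- A Z1 E1 p + A Z1 E2 p - A Z3 E1 p - A Z3 E2 p - dbar2 Th1 p) / 2 \<and>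
     A Z2 E2 p = (- A Z1 E1 p - A Z1 E2 p + A Z3 E1 p - A Z3 E2 p - dbar1 Th2 p) / 2)"
  unfolding torsion_free_def calcC_def fact_def rot_def wedge_def constform_def de_def all_idx
  by (auto simp: field_simps)

lemma torsion_free_iff_params:
  "torsion_free Th1 Th2 A \<longleftrightarrow> (\<exists>\<alpha> \<beta> \<gamma> \<delta>. torsion_free_params Th1 Th2 A \<alpha> \<beta> \<gamma> \<delta>)"
proof
  assume "torsion_free Th1 Th2 A"
  then have "torsion_free_params Th1 Th2 A (A Z1 E1) (A Z1 E2) (A Z3 E1) (A Z3 E2)"
    unfolding torsion_free_iff torsion_free_params_def eq_mkform_iff by (simp add: fun_eq_iff)
  then show "\<exists>\<alpha> \<beta> \<gamma> \<delta>. torsion_free_params Th1 Th2 A \<alpha> \<beta> \<gamma> \<delta>" by blast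
qed (auto simp: torsion_free_iff torsion_free_params_def mkform_def)

lemma cotorsion_free_iff:
  "cotorsion_free Th1 Th2 A \<longleftrightarrow> (\<forall>p.
     R1 (A Z1 E2) p - R2 (A Z1 E1) p + 2 * R1 (A Z2 E2) p + R1 (A Z3 E2) p + R2 (A Z3 E1) p
       = dbar1 Th2 p \<and>
     R1 (A Z1 E2) p + R2 (A Z1 E1) p + 2 * R2 (A Z2 E1) p - R1 (A Z3 E2) p + R2 (A Z3 E1) p
       = dbar2 Th1 p)"
  unfolding cotorsion_free_def calcC_def fact_def rot_def wedge_def constform_def de_def
    all_idx z4neg_def
  by (auto simp: algebra_simps)

lemma cotorsion_free_params_iff:
  assumes "torsion_free_params Th1 Th2 A \<alpha> \<beta> \<gamma> \<delta>"
  shows "cotorsion_free Th1 Th2 A \<longleftrightarrow>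
    (\<forall>p. R1 (\<lambda>q. \<gamma> q - \<alpha> q) p + R2 (\<lambda>q. \<gamma> q - \<alpha> q) p = 0) \<and>
    (\<forall>p. R1 (\<lambda>q. \<beta> q - \<delta> q) p + R2 (\<lambda>q. \<beta> q - \<delta> q) p = 0)"
proof -
  have "R1 (A Z1 E2) p - R2 (A Z1 E1) p + 2 * R1 (A Z2 E2) p + R1 (A Z3 E2) p + R2 (A Z3 E1) p
        = dbar1 Th2 p + (R1 (\<lambda>q. \<gamma> q - \<alpha> q) p + R2 (\<lambda>q. \<gamma> q - \<alpha> q) p)"
    and "R1 (A Z1 E2) p + R2 (A Z1 E1) p + 2 * R2 (A Z2 E1) p - R1 (A Z3 E2) p + R2 (A Z3 E1) p
        = dbar2 Th1 p + (R1 (\<lambda>q. \<beta> q - \<delta> q) p + R2 (\<lambda>q. \<beta> q - \<delta> q) p)" for p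
    using assms by (simp_all add: torsion_free_params_def mkform_def R1_def R2_def
        dbar1_def dbar2_def field_simps split: prod.split)
  then show ?thesis
    unfolding cotorsion_free_iff by (simp add: all_conj_distrib)
qed

lemma torsion_and_cotorsion_free_iff_params:
  "torsion_free Th1 Th2 A \<and> cotorsion_free Th1 Th2 A \<longleftrightarrow>
    (\<exists>\<alpha> \<beta> \<gamma> \<delta>. torsion_free_params Th1 Th2 A \<alpha> \<beta> \<gamma> \<delta>
      \<and> (\<forall>p. R1 (\<lambda>q. \<gamma> q - \<alpha> q) p + R2 (\<lambda>q. \<gamma> q - \<alpha> q) p = 0)
      \<and> (\<forall>p. R1 (\<lambda>q. \<beta> q - \<delta> q) p + R2 (\<lambda>q. \<beta> q - \<delta> q) p = 0))"
proof
  assume free: "torsion_free Th1 Th2 A \<and> cotorsion_free Th1 Th2 A"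
  then obtain \<alpha> \<beta> \<gamma> \<delta> where "torsion_free_params Th1 Th2 A \<alpha> \<beta> \<gamma> \<delta>"
    using torsion_free_iff_params by blast
  with free show "\<exists>\<alpha> \<beta> \<gamma> \<delta>. torsion_free_params Th1 Th2 A \<alpha> \<beta> \<gamma> \<delta>
      \<and> (\<forall>p. R1 (\<lambda>q. \<gamma> q - \<alpha> q) p + R2 (\<lambda>q. \<gamma> q - \<alpha> q) p = 0)
      \<and> (\<forall>p. R1 (\<lambda>q. \<beta> q - \<delta> q) p + R2 (\<lambda>q. \<beta> q - \<delta> q) p = 0)"
    using cotorsion_free_params_iff by blast
qed (use torsion_free_iff_params cotorsion_free_params_iff in blast)

lemma dfun_const: "dfun Th1 Th2 (\<lambda>_. c) = (\<lambda>_ _. 0)"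
  by (simp add: fun_eq_iff all_idx dfun_def mkform_def dbar1_def dbar2_def)

lemma nabla_basis: "nabla Th1 Th2 A (basis a) c b p = - (\<Sum>i\<in>calcC. A i c p * fact i a b)"
  by (cases a) (simp_all add: nabla_def basis_def dfun_const)

lemma nabla_basis_params:
  assumes "torsion_free_params Th1 Th2 A \<alpha> \<beta> \<gamma> \<delta>"
  shows "nabla Th1 Th2 A (basis E1) =
      mkten (\<lambda>p. \<beta> p - \<delta> p - dbar2 Th1 p) (\<lambda>p. \<gamma> p - \<alpha> p)
        (\<lambda>p. \<gamma> p - \<alpha> p - dbar1 Th2 p) (\<lambda>p. - (\<beta> p - \<delta> p))"
    and "nabla Th1 Th2 A (basis E2) =
      mkten (\<lambda>p. - (\<gamma> p - \<alpha> p)) (\<lambda>p. \<beta> p - \<delta> p - dbar2 Th1 p)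
        (\<lambda>p. \<beta> p - \<delta> p) (\<lambda>p. \<gamma> p - \<alpha> p - dbar1 Th2 p)"
  using assms
  by (simp_all add: fun_eq_iff all_idx nabla_basis calcC_def torsion_free_params_def
      mkten_def mkform_def fact_def rot_def field_simps)

theorem proposition4p2:
  fixes Th1 Th2 :: fn and A :: "z4 \<Rightarrow> oneform"
  assumes "\<forall>p. Th1 p \<noteq> 0" and "\<forall>p. Th2 p \<noteq> 0"
    and "\<forall>p. Th1 p * R1 Th2 p = Th2 p * R2 Th1 p"
  shows "(torsion_free Th1 Th2 A \<and> cotorsion_free Th1 Th2 A) \<longleftrightarrow>
      (\<exists>\<alpha> \<beta> \<gamma> \<delta>.
         A Z1 = mkform \<alpha> \<beta>
       \<and> A Z2 = mkform
           (\<lambda>p. (- \<alpha> p + \<beta> p - \<gamma> p - \<delta> p - dbar2 Th1 p) / 2)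
           (\<lambda>p. (- \<alpha> p - \<beta> p + \<gamma> p - \<delta> p - dbar1 Th2 p) / 2)
       \<and> A Z3 = mkform \<gamma> \<delta>
       \<and> (\<forall>p. R1 (\<lambda>q. \<gamma> q - \<alpha> q) p + R2 (\<lambda>q. \<gamma> q - \<alpha> q) p = 0)
       \<and> (\<forall>p. R1 (\<lambda>q. \<beta> q - \<delta> q) p + R2 (\<lambda>q. \<beta> q - \<delta> q) p = 0))
    \<and> (\<forall>\<alpha> \<beta> \<gamma> \<delta>.
         A Z1 = mkform \<alpha> \<beta>
       \<and> A Z2 = mkform
           (\<lambda>p. (- \<alpha> p + \<beta> p - \<gamma> p - \<delta> p - dbar2 Th1 p) / 2)
           (\<lambda>p. (- \<alpha> p - \<beta> p + \<gamma> p - \<delta> p - dbar1 Th2 p) / 2)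
       \<and> A Z3 = mkform \<gamma> \<delta>
       \<and> (\<forall>p. R1 (\<lambda>q. \<gamma> q - \<alpha> q) p + R2 (\<lambda>q. \<gamma> q - \<alpha> q) p = 0)
       \<and> (\<forall>p. R1 (\<lambda>q. \<beta> q - \<delta> q) p + R2 (\<lambda>q. \<beta> q - \<delta> q) p = 0)
       \<longrightarrow> (let a = (\<lambda>p. \<gamma> p - \<alpha> p); b = (\<lambda>p. \<beta> p - \<delta> p);
                s1 = dbar2 Th1; s2 = dbar1 Th2 in
            nabla Th1 Th2 A (basis E1) =
              mkten (\<lambda>p. b p - s1 p) a (\<lambda>p. a p - s2 p) (\<lambda>p. - b p)
          \<and> nabla Th1 Th2 A (basis E2) =
              mkten (\<lambda>p. - a p) (\<lambda>p. b p - s1 p) b (\<lambda>p. a p - s2 p)))"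
  using torsion_and_cotorsion_free_iff_params[of Th1 Th2 A] nabla_basis_params[of Th1 Th2 A]
  unfolding torsion_free_params_def Let_def by blast

end
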